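(* Let $\mathcal{D}=\{(\mathbf{x}_1,y_1),\ldots,(\mathbf{x}_n,y_n)\}$ with $n\ge 2$, $\mathbf{x}_i\in\mathbb{R}^d$, and let $\mathcal{D}'=\mathcal{D}\setminus\{(\mathbf{x}_n,y_n)\}$. Let $\ell(\mathbf{w}^\top\mathbf{x},y)$ be a convex loss, differentiable everywhere and twice differentiable in its first argument, and let $\lambda>0$. Define $$L(\mathbf{w};\mathcal{D})=\sum_{i=1}^n \ell(\mathbf{w}^\top\mathbf{x}_i,y_i)+\frac{\lambda n}{2}\|\mathbf{w}\|_2^2,\qquad L(\mathbf{w};\mathcal{D}')=\sum_{i=1}^{n-1} \ell(\mathbf{w}^\top\mathbf{x}_i,y_i)+\frac{\lambda (n-1)}{2}\|\mathbf{w}\|_2^2,$$ let $\mathbf{w}^*=\arg\min_{\mathbf{w}} L(\mathbf{w};\mathcal{D})$, $\Delta=\lambda\mathbf{w}^*+\nabla\ell((\mathbf{w}^* )^\top\mathbf{x}_n,y_n)$, $H_{\mathbf{w}}=\nabla^2 L(\mathbf{w};\mathcal{D}')$, and $\mathbf{w}^-=\mathbf{w}^*+H_{\mathbf{w}^*}^{-1}\Delta$. Suppose that for all $(\mathbf{x}_i,y_i)\in\mathcal{D}$ and all $\mathbf{w}\in\mathbb{R}^d$, $\|\nabla\ell(\mathbf{w}^\top\mathbf{x}_i,y_i)\|_2\le C$; suppose also that $\ell''$ is $\gamma$-Lipschitz and $\|\mathbf{x}_i\|_2\le 1$ for all $(\mathbf{x}_i,y_i)\in\mathcal{D}$. Then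 $$\|\nabla L(\mathbf{w}^-;\mathcal{D}')\|_2=\|(H_{\mathbf{w}_\eta}-H_{\mathbf{w}^*})H_{\mathbf{w}^*}^{-1}\Delta\|_2\le \gamma(n-1)\|H_{\mathbf{w}^*}^{-1}\Delta\|_2^2\le\frac{4\gamma C^2}{\lambda^2(n-1)},$$ where $H_{\mathbf{w}_\eta}$ is the Hessian of $L(\cdot;\mathcal{D}')$ at $\mathbf{w}_\eta=\mathbf{w}^*+\eta H_{\mathbf{w}^*}^{-1}\Delta$ for some $\eta\in[0,1]$.
   Context: Gradients $\nabla\ell(\mathbf{w}^\top\mathbf{x},y)$ and Hessians are taken with respect to $\mathbf{w}$; $\ell''$ denotes the second derivative of $\ell$ with respect to its first (scalar) argument. $\mathbf{w}^-$ is called the Newton update removal of the point $(\mathbf{x}_n,y_n)$. *)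

theory Defs
  imports "HOL-Analysis.Analysis"
begin

definition grad :: "(real^'d \<Rightarrow> real) \<Rightarrow> real^'d \<Rightarrow> real^'d" where
  "grad f w = (THE g. GDERIV f w :> g)"

definition hess :: "(real^'d \<Rightarrow> real) \<Rightarrow> real^'d \<Rightarrow> real^'d^'d" where
  "hess f w = (\<chi> i. grad (\<lambda>v. grad f v $ i) w)"

definition Lreg :: "(real \<Rightarrow> 'y \<Rightarrow> real) \<Rightarrow> real \<Rightarrow> (nat \<Rightarrow> real^'d) \<Rightarrow> (nat \<Rightarrow> 'y)
                     \<Rightarrow> nat \<Rightarrow> real^'d \<Rightarrow> real" where
  "Lreg l lam x y m w = (\<Sum>i=1..m. l (w \<bullet> x i) (y i)) + lam * real m / 2 * (norm w)^2"

end

theory Submission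
  imports Defs
begin

(* Since w* minimises L(.;D) = L(.;D') + l(w^T x_n, y_n) + lam/2 |w|^2, the gradient of L(.;D')
   at w* is -Delta, so w^- = w* + u is one Newton step for L(.;D') from w*.  Its residual
   grad L'(w* + u) is the increment of g(t) = grad L'(w* + t u) - t H_{w*} u over [0,1]; the
   mean value inequality bounds it by |(H_{w*+eta u} - H_{w*}) u| for some eta, and since this
   norm is continuous in eta and vanishes at 0, the intermediate value theorem makes it an
   equality.  Lipschitz continuity of l'' and |x_i| <= 1 bound the Hessian difference by
   gamma (n-1) |u|.  Convexity makes H_w >= lam (n-1) I, so lam (n-1) |u| <= |Delta|, and the
   optimality condition at w* gives lam |w*| <= C, whence |Delta| <= 2C. *)

lemma grad_eqI:
  assumes "GDERIV f w :> g"
  shows "grad f w = g"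
  unfolding grad_def
proof (rule the_equality)
  show "GDERIV f w :> g" by (fact assms)
next
  fix g' assume "GDERIV f w :> g'"
  with assms have "(\<lambda>h. h \<bullet> g') = (\<lambda>h. h \<bullet> g)"
    unfolding gderiv_def using has_derivative_unique by blast
  then have "(g' - g) \<bullet> (g' - g) = 0"
    by (metis inner_diff_left inner_commute right_minus_eq)
  then show "g' = g" by simp
qed

lemma GDERIV_inner_compose:
  fixes a :: "'a::real_inner"
  assumes "(f has_real_derivative f') (at (w \<bullet> a))"
  shows "GDERIV (\<lambda>v. f (v \<bullet> a)) w :> f' *\<^sub>R a"
proof -
  have "GDERIV (\<lambda>v. v \<bullet> a) w :> a"
    unfolding gderiv_def by (auto intro!: derivative_eq_intros)
  from GDERIV_DERIV_compose[OF this assms] show ?thesis .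
qed

lemma GDERIV_sum:
  assumes "\<And>i. i \<in> S \<Longrightarrow> GDERIV (f i) w :> g i"
  shows "GDERIV (\<lambda>v. \<Sum>i\<in>S. f i v) w :> (\<Sum>i\<in>S. g i)"
  using assms unfolding gderiv_def inner_sum_right by (rule has_derivative_sum)

lemma GDERIV_scaled_power2_norm: "GDERIV (\<lambda>v. c * (norm v)\<^sup>2) w :> (2 * c) *\<^sub>R w"
  unfolding gderiv_def power2_norm_eq_inner
  by (auto intro!: derivative_eq_intros simp: inner_commute algebra_simps)

lemma GDERIV_eq_0_at_minimum:
  assumes "GDERIV f w :> g" and "\<And>v. f w \<le> f v"
  shows "g = 0"
proof -
  have "(\<lambda>h. h \<bullet> g) = (\<lambda>h. 0)"
    using assms by (intro differential_zero_maxmin[of w UNIV f]) (auto simp: gderiv_def)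
  then have "g \<bullet> g = 0" by metis
  then show ?thesis by simp
qed

lemma hess_eq_matrix:
  fixes f :: "real^'n \<Rightarrow> real"
  assumes "(grad f has_derivative D) (at w)"
  shows "hess f w = matrix D"
proof -
  have lin: "bounded_linear D" using assms by (rule has_derivative_bounded_linear)
  have "grad (\<lambda>v. grad f v $ i) w = matrix D $ i" for i
  proof (rule grad_eqI)
    have "((\<lambda>v. grad f v $ i) has_derivative (\<lambda>h. D h $ i)) (at w)"
      using bounded_linear.has_derivative[OF bounded_linear_vec_nth assms] .
    moreover have "D h $ i = h \<bullet> matrix D $ i" for h
      using matrix_vector_mul(3)[OF lin]
      by (metis matrix_vector_mul_component inner_commute)
    ultimately show "GDERIV (\<lambda>v. grad f v $ i) w :> matrix D $ i"
      unfolding gderiv_def by simp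
  qed
  then show ?thesis unfolding hess_def by (simp add: vec_eq_iff)
qed

lemma hess_mult_vector:
  fixes f :: "real^'n \<Rightarrow> real"
  assumes "(grad f has_derivative D) (at w)"
  shows "hess f w *v v = D v"
  using hess_eq_matrix[OF assms] matrix_vector_mul(3)[OF has_derivative_bounded_linear[OF assms]]
  by metis

lemma convex_on_deriv_mono:
  fixes f :: "real \<Rightarrow> real"
  assumes convex: "convex_on UNIV f" and f': "\<And>t. (f has_real_derivative f' t) (at t)"
  shows "mono f'"
proof (rule monoI)
  fix a b :: real assume "a \<le> b"
  have tangent: "f' s * (t - s) \<le> f t - f s" for s t
    using convex_on_imp_above_tangent[OF convex, of s t "f' s"] f' by simp
  from tangent[of a b] tangent[of b a] have "0 \<le> (f' b - f' a) * (b - a)"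
    by (simp add: algebra_simps)
  with \<open>a \<le> b\<close> show "f' a \<le> f' b"
    by (cases "a = b") (auto simp: zero_le_mult_iff)
qed

lemma convex_on_second_deriv_nonneg:
  fixes f :: "real \<Rightarrow> real"
  assumes "convex_on UNIV f" and "\<And>t. (f has_real_derivative f' t) (at t)"
    and "(f' has_real_derivative f'') (at t)"
  shows "f'' \<ge> 0"
  using mono_on_imp_deriv_nonneg[of UNIV f'] convex_on_deriv_mono[OF assms(1,2)] assms(3)
  by simp

lemma matrix_inv_right:
  fixes A :: "'a::field^'n^'n"
  assumes "invertible A"
  shows "A ** matrix_inv A = mat 1"
  using someI_ex[OF assms[unfolded invertible_def]] unfolding matrix_inv_def by blast

lemma coercive_matrix_inv:
  fixes A :: "real^'n^'n"
  assumes "\<mu> > 0" and coercive: "\<And>v. \<mu> * (norm v)\<^sup>2 \<le> v \<bullet> (A *v v)"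
  shows "A *v (matrix_inv A *v z) = z" and "\<mu> * norm (matrix_inv A *v z) \<le> norm z"
proof -
  have norm_le: "\<mu> * norm v \<le> norm (A *v v)" for v
  proof (cases "v = 0")
    case False
    have "norm v * (\<mu> * norm v) \<le> norm v * norm (A *v v)"
      using coercive[of v] norm_cauchy_schwarz[of v "A *v v"]
      by (simp add: power2_eq_square mult.left_commute)
    then show ?thesis using False by simp
  qed simp
  have "A *v v = 0 \<Longrightarrow> v = 0" for v
    using norm_le[of v] \<open>\<mu> > 0\<close> by (simp add: mult_le_0_iff)
  then have "invertible A"
    using matrix_left_invertible_ker invertible_left_inverse by blast
  then show inv: "A *v (matrix_inv A *v z) = z"
    by (simp add: matrix_vector_mul_assoc matrix_inv_right)
  show "\<mu> * norm (matrix_inv A *v z) \<le> norm z"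
    using norm_le[of "matrix_inv A *v z"] unfolding inv .
qed

lemma newton_residual_mean_value:
  fixes G :: "'a::real_normed_vector \<Rightarrow> 'b::real_inner"
  assumes deriv: "\<And>t. (G has_derivative G' (w + t *\<^sub>R u)) (at (w + t *\<^sub>R u))"
    and cont: "continuous_on {0..1} (\<lambda>t. G' (w + t *\<^sub>R u) u)"
    and newton: "G' w u = - G w"
  shows "\<exists>\<eta>\<in>{0..1}. norm (G (w + u)) = norm (G' (w + \<eta> *\<^sub>R u) u - G' w u)"
proof -
  define g where "g t = G (w + t *\<^sub>R u) - t *\<^sub>R G' w u" for t
  define \<phi> where "\<phi> t = norm (G' (w + t *\<^sub>R u) u - G' w u)" for t
  have g_deriv: "(g has_derivative (\<lambda>h. h *\<^sub>R (G' (w + t *\<^sub>R u) u - G' w u))) (at t)" for t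
  proof -
    have "((\<lambda>t. w + t *\<^sub>R u) has_derivative (\<lambda>h. h *\<^sub>R u)) (at t)"
      by (auto intro!: derivative_eq_intros)
    from has_derivative_compose[OF this deriv]
    have "((\<lambda>t. G (w + t *\<^sub>R u)) has_derivative (\<lambda>h. h *\<^sub>R G' (w + t *\<^sub>R u) u)) (at t)"
      using linear.scaleR[OF has_derivative_linear[OF deriv]] by simp
    then show ?thesis
      unfolding g_def by (auto intro!: derivative_eq_intros simp: scaleR_diff_right)
  qed
  then have "continuous_on {0..1} g"
    by (intro continuous_at_imp_continuous_on ballI has_derivative_continuous)
  from mvt_general[OF zero_less_one this g_deriv]
  obtain \<eta> where \<eta>: "\<eta> \<in> {0<..<1}" and "norm (g 1 - g 0) \<le> \<phi> \<eta>"
    unfolding \<phi>_def by auto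
  moreover have "g 1 - g 0 = G (w + u)"
    unfolding g_def newton by simp
  ultimately have "\<phi> 0 \<le> norm (G (w + u))" "norm (G (w + u)) \<le> \<phi> \<eta>"
    unfolding \<phi>_def by auto
  moreover have "continuous_on {0..\<eta>} \<phi>"
    unfolding \<phi>_def using \<eta> by (intro continuous_intros continuous_on_subset[OF cont]) auto
  ultimately obtain t where "0 \<le> t" "t \<le> \<eta>" "\<phi> t = norm (G (w + u))"
    using IVT'[of \<phi> 0 _ \<eta>] \<eta> by auto
  then show ?thesis
    using \<eta> unfolding \<phi>_def by (intro bexI[of _ t]) auto
qed

(* l1 and l2 stand for the first and second derivatives of the loss in its first argument. *)
definition Lreg_grad :: "('y \<Rightarrow> real \<Rightarrow> real) \<Rightarrow> real \<Rightarrow> (nat \<Rightarrow> 'a::real_inner) \<Rightarrow> (nat \<Rightarrow> 'y)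
    \<Rightarrow> nat \<Rightarrow> 'a \<Rightarrow> 'a" where
  "Lreg_grad l1 lam x y m w = (\<Sum>i=1..m. l1 (y i) (w \<bullet> x i) *\<^sub>R x i) + (lam * real m) *\<^sub>R w"

definition Lreg_hess_mult :: "('y \<Rightarrow> real \<Rightarrow> real) \<Rightarrow> real \<Rightarrow> (nat \<Rightarrow> 'a::real_inner) \<Rightarrow> (nat \<Rightarrow> 'y)
    \<Rightarrow> nat \<Rightarrow> 'a \<Rightarrow> 'a \<Rightarrow> 'a" where
  "Lreg_hess_mult l2 lam x y m w v =
     (\<Sum>i=1..m. (l2 (y i) (w \<bullet> x i) * (x i \<bullet> v)) *\<^sub>R x i) + (lam * real m) *\<^sub>R v"

lemma Lreg_grad_Suc:
  "Lreg_grad l1 lam x y (Suc m) w =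
     Lreg_grad l1 lam x y m w + (lam *\<^sub>R w + l1 (y (Suc m)) (w \<bullet> x (Suc m)) *\<^sub>R x (Suc m))"
  by (simp add: Lreg_grad_def algebra_simps)

lemma grad_loss:
  assumes "\<And>b t. ((\<lambda>s. l s b) has_real_derivative l1 b t) (at t)"
  shows "grad (\<lambda>v. l (v \<bullet> a) b) w = l1 b (w \<bullet> a) *\<^sub>R a"
  by (intro grad_eqI GDERIV_inner_compose assms)

lemma GDERIV_Lreg:
  assumes "\<And>b t. ((\<lambda>s. l s b) has_real_derivative l1 b t) (at t)"
  shows "GDERIV (Lreg l lam x y m) w :> Lreg_grad l1 lam x y m w"
proof -
  have "GDERIV (\<lambda>v. (\<Sum>i=1..m. l (v \<bullet> x i) (y i)) + lam * real m / 2 * (norm v)\<^sup>2) w :>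
      (\<Sum>i=1..m. l1 (y i) (w \<bullet> x i) *\<^sub>R x i) + (2 * (lam * real m / 2)) *\<^sub>R w"
    by (intro GDERIV_add GDERIV_sum GDERIV_inner_compose GDERIV_scaled_power2_norm assms)
  then show ?thesis
    unfolding Lreg_def[abs_def] Lreg_grad_def by simp
qed

lemma grad_Lreg:
  assumes "\<And>b t. ((\<lambda>s. l s b) has_real_derivative l1 b t) (at t)"
  shows "grad (Lreg l lam x y m) = Lreg_grad l1 lam x y m"
  using grad_eqI[OF GDERIV_Lreg[OF assms]] by (rule ext)

lemma Lreg_grad_has_derivative:
  fixes x :: "nat \<Rightarrow> 'a::real_inner"
  assumes "\<And>b t. (l1 b has_real_derivative l2 b t) (at t)"
  shows "(Lreg_grad l1 lam x y m has_derivative Lreg_hess_mult l2 lam x y m w) (at w)"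
proof -
  have "((\<lambda>w. l1 b (w \<bullet> a)) has_derivative (\<lambda>v. l2 b (w \<bullet> a) * (a \<bullet> v))) (at w)"
    for a :: 'a and b
  proof -
    have "((\<lambda>w. w \<bullet> a) has_derivative (\<lambda>v. a \<bullet> v)) (at w)"
      by (auto intro!: derivative_eq_intros simp: inner_commute)
    from has_derivative_compose[OF this assms[unfolded has_field_derivative_def]]
    show ?thesis .
  qed
  then show ?thesis
    unfolding Lreg_grad_def[abs_def] Lreg_hess_mult_def[abs_def]
    by (auto intro!: derivative_eq_intros)
qed

lemma hess_Lreg_mult_vector:
  fixes x :: "nat \<Rightarrow> real^'d"
  assumes l1: "\<And>b t. ((\<lambda>s. l s b) has_real_derivative l1 b t) (at t)"
    and l2: "\<And>b t. (l1 b has_real_derivative l2 b t) (at t)"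
  shows "hess (Lreg l lam x y m) w *v v = Lreg_hess_mult l2 lam x y m w v"
  using Lreg_grad_has_derivative[OF l2]
  by (intro hess_mult_vector) (simp add: grad_Lreg[OF l1])

lemma Lreg_hess_mult_coercive:
  assumes "\<And>b s. l2 b s \<ge> 0" and "lam \<ge> 0"
  shows "lam * real m * (norm v)\<^sup>2 \<le> v \<bullet> Lreg_hess_mult l2 lam x y m w v"
proof -
  have "v \<bullet> Lreg_hess_mult l2 lam x y m w v =
      (\<Sum>i=1..m. l2 (y i) (w \<bullet> x i) * (x i \<bullet> v)\<^sup>2) + lam * real m * (v \<bullet> v)"
    by (simp add: Lreg_hess_mult_def inner_add_right inner_sum_right power2_eq_square
        inner_commute mult.assoc)
  moreover have "0 \<le> (\<Sum>i=1..m. l2 (y i) (w \<bullet> x i) * (x i \<bullet> v)\<^sup>2)"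
    using assms by (intro sum_nonneg) simp
  ultimately show ?thesis by (simp add: power2_norm_eq_inner)
qed

lemma Lreg_hess_mult_lipschitz:
  fixes x :: "nat \<Rightarrow> 'a::real_inner"
  assumes lip: "\<And>b. \<gamma>-lipschitz_on UNIV (l2 b)"
    and xnorm: "\<And>i. i \<in> {1..m} \<Longrightarrow> norm (x i) \<le> 1"
  shows "norm (Lreg_hess_mult l2 lam x y m a v - Lreg_hess_mult l2 lam x y m b v)
    \<le> \<gamma> * real m * norm (a - b) * norm v"
proof -
  have "norm (Lreg_hess_mult l2 lam x y m a v - Lreg_hess_mult l2 lam x y m b v) =
      norm (\<Sum>i=1..m. ((l2 (y i) (a \<bullet> x i) - l2 (y i) (b \<bullet> x i)) * (x i \<bullet> v)) *\<^sub>R x i)"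
    by (simp add: Lreg_hess_mult_def sum_subtractf[symmetric] scaleR_diff_left left_diff_distrib)
  also have "\<dots> \<le> (\<Sum>i=1..m. norm (((l2 (y i) (a \<bullet> x i) - l2 (y i) (b \<bullet> x i)) * (x i \<bullet> v)) *\<^sub>R x i))"
    by (rule norm_sum)
  also have "\<dots> \<le> (\<Sum>i=1..m. \<gamma> * norm (a - b) * norm v)"
  proof (rule sum_mono)
    fix i assume "i \<in> {1..m}"
    then have xi: "norm (x i) \<le> 1" by (rule xnorm)
    have "\<bar>l2 (y i) (a \<bullet> x i) - l2 (y i) (b \<bullet> x i)\<bar> \<le> \<gamma> * \<bar>(a - b) \<bullet> x i\<bar>"
      using lipschitz_onD[OF lip, of "a \<bullet> x i" "b \<bullet> x i"] by (simp add: dist_real_def inner_diff_left)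
    also have "\<dots> \<le> \<gamma> * norm (a - b)"
      using Cauchy_Schwarz_ineq2[of "a - b" "x i"] xi lipschitz_on_nonneg[OF lip]
      by (intro mult_left_mono) (auto intro: order_trans[OF _ mult_left_le])
    finally have l2_diff: "\<bar>l2 (y i) (a \<bullet> x i) - l2 (y i) (b \<bullet> x i)\<bar> \<le> \<gamma> * norm (a - b)" .
    have xv: "\<bar>x i \<bullet> v\<bar> \<le> norm v"
      using Cauchy_Schwarz_ineq2[of "x i" v] mult_right_mono[OF xi norm_ge_zero[of v]] by simp
    have "norm (((l2 (y i) (a \<bullet> x i) - l2 (y i) (b \<bullet> x i)) * (x i \<bullet> v)) *\<^sub>R x i)
        = \<bar>l2 (y i) (a \<bullet> x i) - l2 (y i) (b \<bullet> x i)\<bar> * \<bar>x i \<bullet> v\<bar> * norm (x i)"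
      by (simp add: abs_mult)
    also have "\<dots> \<le> (\<gamma> * norm (a - b)) * norm v * 1"
      using l2_diff xv xi by (intro mult_mono) auto
    finally show "norm (((l2 (y i) (a \<bullet> x i) - l2 (y i) (b \<bullet> x i)) * (x i \<bullet> v)) *\<^sub>R x i)
        \<le> \<gamma> * norm (a - b) * norm v" by simp
  qed
  also have "\<dots> = \<gamma> * real m * norm (a - b) * norm v" by simp
  finally show ?thesis .
qed

lemma Lreg_minimizer_norm_le:
  fixes x :: "nat \<Rightarrow> real^'d"
  assumes l1: "\<And>b t. ((\<lambda>s. l s b) has_real_derivative l1 b t) (at t)"
    and min: "\<And>w. Lreg l lam x y n wstar \<le> Lreg l lam x y n w"
    and "n > 0" and "lam \<ge> 0"
    and bound: "\<And>i. i \<in> {1..n} \<Longrightarrow> norm (l1 (y i) (wstar \<bullet> x i) *\<^sub>R x i) \<le> C"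
  shows "lam * norm wstar \<le> C"
proof -
  have "Lreg_grad l1 lam x y n wstar = 0"
    using GDERIV_eq_0_at_minimum[OF GDERIV_Lreg[OF l1] min] .
  then have "(lam * real n) *\<^sub>R wstar = - (\<Sum>i=1..n. l1 (y i) (wstar \<bullet> x i) *\<^sub>R x i)"
    unfolding Lreg_grad_def by (simp add: eq_neg_iff_add_eq_0 add.commute)
  then have "norm ((lam * real n) *\<^sub>R wstar) = norm (\<Sum>i=1..n. l1 (y i) (wstar \<bullet> x i) *\<^sub>R x i)"
    by simp
  then have "real n * (lam * norm wstar) = norm (\<Sum>i=1..n. l1 (y i) (wstar \<bullet> x i) *\<^sub>R x i)"
    using \<open>lam \<ge> 0\<close> by (simp add: ac_simps)
  also have "\<dots> \<le> (\<Sum>i=1..n. norm (l1 (y i) (wstar \<bullet> x i) *\<^sub>R x i))"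
    by (rule norm_sum)
  also have "\<dots> \<le> (\<Sum>i=1..n. C)"
    using bound by (rule sum_mono)
  also have "\<dots> = real n * C" by simp
  finally show ?thesis using \<open>n > 0\<close> by simp
qed

lemma Lreg_newton_residual:
  fixes l :: "real \<Rightarrow> 'y \<Rightarrow> real" and lam :: real and x :: "nat \<Rightarrow> real^'d"
    and y :: "nat \<Rightarrow> 'y" and m :: nat
  defines "L \<equiv> Lreg l lam x y m"
  assumes l1: "\<And>b t. ((\<lambda>s. l s b) has_real_derivative l1 b t) (at t)"
    and l2: "\<And>b t. (l1 b has_real_derivative l2 b t) (at t)"
    and lip: "\<And>b. \<gamma>-lipschitz_on UNIV (l2 b)"
    and xnorm: "\<And>i. i \<in> {1..m} \<Longrightarrow> norm (x i) \<le> 1"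
    and newton: "hess L w *v u = - grad L w"
  shows "\<exists>\<eta>\<in>{0..1}. norm (grad L (w + u)) = norm ((hess L (w + \<eta> *\<^sub>R u) - hess L w) *v u)
    \<and> norm ((hess L (w + \<eta> *\<^sub>R u) - hess L w) *v u) \<le> \<gamma> * real m * (norm u)\<^sup>2"
proof -
  have H: "(*v) (hess L v) = Lreg_hess_mult l2 lam x y m v" for v
    unfolding L_def using hess_Lreg_mult_vector[OF l1 l2] by (intro ext)
  have "(grad L has_derivative (\<lambda>h. hess L v *v h)) (at v)" for v
    unfolding H unfolding L_def grad_Lreg[OF l1] by (rule Lreg_grad_has_derivative[OF l2])
  moreover have "continuous_on {0..1} (\<lambda>t. hess L (w + t *\<^sub>R u) *v u)"
    unfolding H Lreg_hess_mult_def
    by (intro continuous_intros continuous_on_compose2[OF lipschitz_on_continuous_on[OF lip]]) auto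
  ultimately obtain \<eta> where \<eta>: "\<eta> \<in> {0..1}"
    and residual: "norm (grad L (w + u)) = norm (hess L (w + \<eta> *\<^sub>R u) *v u - hess L w *v u)"
    using newton_residual_mean_value[of "grad L" "\<lambda>v h. hess L v *v h" w u] newton by blast
  have "norm (hess L (w + \<eta> *\<^sub>R u) *v u - hess L w *v u) \<le> \<gamma> * real m * norm (\<eta> *\<^sub>R u) * norm u"
    unfolding H
    using Lreg_hess_mult_lipschitz[where x = x and m = m and a = "w + \<eta> *\<^sub>R u" and b = w, OF lip xnorm]
    by simp
  also have "\<dots> \<le> \<gamma> * real m * norm u * norm u"
    using \<eta> lipschitz_on_nonneg[OF lip]
    by (intro mult_right_mono mult_left_mono) (auto simp: mult_left_le_one_le)
  finally show ?thesis
    using \<eta> residual by (auto simp: matrix_vector_mult_diff_rdistrib power2_eq_square)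
qed

lemma Lreg_newton_removal:
  fixes l :: "real \<Rightarrow> 'y \<Rightarrow> real" and l1 l2 :: "'y \<Rightarrow> real \<Rightarrow> real"
    and x :: "nat \<Rightarrow> real^'d" and y :: "nat \<Rightarrow> 'y" and lam C \<gamma> :: real and m :: nat and wstar :: "real^'d"
  defines "L' \<equiv> Lreg l lam x y m"
    and "\<Delta> \<equiv> lam *\<^sub>R wstar + l1 (y (Suc m)) (wstar \<bullet> x (Suc m)) *\<^sub>R x (Suc m)"
  assumes u_def: "u = matrix_inv (hess L' wstar) *v \<Delta>"
    and l1: "\<And>b t. ((\<lambda>s. l s b) has_real_derivative l1 b t) (at t)"
    and l2: "\<And>b t. (l1 b has_real_derivative l2 b t) (at t)"
    and l2_nonneg: "\<And>b t. 0 \<le> l2 b t"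
    and lip: "\<And>b. \<gamma>-lipschitz_on UNIV (l2 b)"
    and "m \<ge> 1" and "lam > 0"
    and wstar_min: "\<And>w. Lreg l lam x y (Suc m) wstar \<le> Lreg l lam x y (Suc m) w"
    and loss_grad_le: "\<And>i. i \<in> {1..Suc m} \<Longrightarrow> norm (l1 (y i) (wstar \<bullet> x i) *\<^sub>R x i) \<le> C"
    and xnorm: "\<And>i. i \<in> {1..Suc m} \<Longrightarrow> norm (x i) \<le> 1"
  shows "\<exists>\<eta>\<in>{0..1}.
      norm (grad L' (wstar + u)) = norm ((hess L' (wstar + \<eta> *\<^sub>R u) - hess L' wstar) *v u)
    \<and> norm ((hess L' (wstar + \<eta> *\<^sub>R u) - hess L' wstar) *v u) \<le> \<gamma> * real m * (norm u)\<^sup>2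
    \<and> \<gamma> * real m * (norm u)\<^sup>2 \<le> 4 * \<gamma> * C\<^sup>2 / (lam\<^sup>2 * real m)"
proof -
  have lam_m: "lam * real m > 0" using \<open>m \<ge> 1\<close> \<open>lam > 0\<close> by simp
  have "lam * real m * (norm v)\<^sup>2 \<le> v \<bullet> (hess L' w *v v)" for v w
    unfolding L'_def hess_Lreg_mult_vector[OF l1 l2] using \<open>lam > 0\<close> l2_nonneg
    by (intro Lreg_hess_mult_coercive) auto
  from coercive_matrix_inv[OF lam_m this]
  have newton: "hess L' wstar *v u = \<Delta>" and u_le: "lam * real m * norm u \<le> norm \<Delta>"
    unfolding u_def by auto
  have "Lreg_grad l1 lam x y (Suc m) wstar = 0"
    by (rule GDERIV_eq_0_at_minimum[OF GDERIV_Lreg[OF l1] wstar_min])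
  then have "grad L' wstar = - \<Delta>"
    unfolding L'_def \<Delta>_def grad_Lreg[OF l1] Lreg_grad_Suc by (metis eq_neg_iff_add_eq_0)
  with newton have "hess L' wstar *v u = - grad L' wstar" by simp
  moreover have "i \<in> {1..m} \<Longrightarrow> norm (x i) \<le> 1" for i using xnorm by simp
  ultimately obtain \<eta> where "\<eta> \<in> {0..1}"
    and "norm (grad L' (wstar + u)) = norm ((hess L' (wstar + \<eta> *\<^sub>R u) - hess L' wstar) *v u)"
    and "norm ((hess L' (wstar + \<eta> *\<^sub>R u) - hess L' wstar) *v u) \<le> \<gamma> * real m * (norm u)\<^sup>2"
    using Lreg_newton_residual[where l = l, OF l1 l2 lip] unfolding L'_def by blast
  moreover have "\<gamma> * real m * (norm u)\<^sup>2 \<le> 4 * \<gamma> * C\<^sup>2 / (lam\<^sup>2 * real m)"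
  proof -
    have "lam * norm wstar \<le> C"
      using Lreg_minimizer_norm_le[OF l1 wstar_min _ _ loss_grad_le] \<open>lam > 0\<close> by simp
    then have "norm \<Delta> \<le> 2 * C"
      unfolding \<Delta>_def using loss_grad_le[of "Suc m"] \<open>lam > 0\<close>
        norm_triangle_ineq[of "lam *\<^sub>R wstar" "l1 (y (Suc m)) (wstar \<bullet> x (Suc m)) *\<^sub>R x (Suc m)"]
      by simp
    with u_le lam_m have "norm u \<le> 2 * C / (lam * real m)"
      by (simp add: pos_le_divide_eq mult.commute)
    then have "\<gamma> * real m * (norm u)\<^sup>2 \<le> \<gamma> * real m * (2 * C / (lam * real m))\<^sup>2"
      using lipschitz_on_nonneg[OF lip] by (intro mult_left_mono power_mono) auto
    also have "\<dots> = 4 * \<gamma> * C\<^sup>2 / (lam\<^sup>2 * real m)"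
      using lam_m by (simp add: field_simps power2_eq_square)
    finally show ?thesis .
  qed
  ultimately show ?thesis by blast
qed

theorem theorem1:
  fixes l :: "real \<Rightarrow> 'y \<Rightarrow> real"
    and x :: "nat \<Rightarrow> real^'d" and y :: "nat \<Rightarrow> 'y"
    and n :: nat and lam C \<gamma> :: real and wstar :: "real^'d"
  assumes n2: "n \<ge> 2"
    and lam_pos: "lam > 0"
    and convex: "\<And>b. convex_on UNIV (\<lambda>t. l t b)"
    and diff1: "\<And>b t. (\<lambda>s. l s b) differentiable (at t)"
    and diff2: "\<And>b t. deriv (\<lambda>s. l s b) differentiable (at t)"
    and wstar_min: "\<And>w. Lreg l lam x y n wstar \<le> Lreg l lam x y n w"
    and grad_bound: "\<And>i w. i \<in> {1..n} \<Longrightarrow> norm (grad (\<lambda>v. l (v \<bullet> x i) (y i)) w) \<le> C"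
    and lip: "\<And>b. \<gamma>-lipschitz_on UNIV (deriv (deriv (\<lambda>s. l s b)))"
    and xnorm: "\<And>i. i \<in> {1..n} \<Longrightarrow> norm (x i) \<le> 1"
  shows
    "let L' = Lreg l lam x y (n - 1);
         H = hess L';
         \<Delta> = lam *\<^sub>R wstar + grad (\<lambda>v. l (v \<bullet> x n) (y n)) wstar;
         u = matrix_inv (H wstar) *v \<Delta>;
         wminus = wstar + u
     in \<exists>\<eta>\<in>{0..1}.
          norm (grad L' wminus) = norm ((H (wstar + \<eta> *\<^sub>R u) - H wstar) *v u)
        \<and> norm ((H (wstar + \<eta> *\<^sub>R u) - H wstar) *v u) \<le> \<gamma> * real (n - 1) * (norm u)^2
        \<and> \<gamma> * real (n - 1) * (norm u)^2 \<le> 4 * \<gamma> * C^2 / (lam^2 * real (n - 1))"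
proof -
  define l1 where "l1 b = deriv (\<lambda>s. l s b)" for b
  define l2 where "l2 b = deriv (l1 b)" for b
  have l1: "((\<lambda>s. l s b) has_real_derivative l1 b t) (at t)" for b t
    unfolding l1_def using diff1 DERIV_deriv_iff_real_differentiable by blast
  have l2: "(l1 b has_real_derivative l2 b t) (at t)" for b t
    unfolding l2_def l1_def using diff2 DERIV_deriv_iff_real_differentiable by blast
  have l2_nonneg: "0 \<le> l2 b t" for b t
    by (rule convex_on_second_deriv_nonneg[OF convex l1 l2])
  have lip2: "\<gamma>-lipschitz_on UNIV (l2 b)" for b
    unfolding l2_def l1_def by (rule lip)
  have loss_grad_le: "norm (l1 (y i) (wstar \<bullet> x i) *\<^sub>R x i) \<le> C" if "i \<in> {1..n}" for i
    using grad_bound[OF that] unfolding grad_loss[OF l1] .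
  define m where "m = n - 1"
  have n: "n = Suc m" and "m \<ge> 1" using n2 unfolding m_def by auto
  from Lreg_newton_removal[where l = l, OF refl l1 l2 l2_nonneg lip2 \<open>m \<ge> 1\<close> lam_pos
      wstar_min[unfolded n] loss_grad_le[unfolded n] xnorm[unfolded n]]
  show ?thesis unfolding Let_def grad_loss[OF l1] n by simp
qed

end
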